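(* Let $k$ be a field of characteristic $0$, $R=k[x_1,\dots,x_n]$, $\ell=x_1+\dots+x_n$, let $d_1,\dots,d_n$ be positive integers such that $I=(x_1^{d_1},\dots,x_{n-1}^{d_{n-1}},x_n^2,\ell^{d_n})$ is minimally generated by these elements, and let $(a_1,\dots,a_{n+1})\in R^{n+1}$ satisfy $a_1x_1^{d_1}+\dots+a_{n-1}x_{n-1}^{d_{n-1}}+a_nx_n^2+a_{n+1}\ell^{d_n}=0$. If $\sum_{i=1}^n(d_i-1)$ is odd, then $$c_1a_1x_1^{d_1-2}+\dots+c_{n-1}a_{n-1}x_{n-1}^{d_{n-1}-2}+a_n+c_na_{n+1}\ell^{d_n-2}\in I,$$ where $c_i=\sum_{j=0}^{\lfloor (d_i-1)/2\rfloor}(d_i-1-2j)^2$. In particular, when $n$ is odd, every relation $(a_1,\dots,a_{n+1})$ of $(x_1^2,\dots,x_n^2,\ell^2)$ (i.e. $\sum_{i=1}^n a_ix_i^2+a_{n+1}\ell^2=0$) satisfies $a_1+\dots+a_{n+1}\in(x_1^2,\dots,x_n^2,\ell^2)$.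
   Context: When $c_i=0$ the corresponding term (which may involve a negative exponent formally) is zero. *)

theory Defs
  imports Main "HOL-Library.Poly_Mapping"
begin

text \<open>Multivariate polynomials over a coefficient ring 'a, in variables indexed by nat:
  a polynomial is a finitely supported map from monomials (exponent vectors)
  to coefficients; multiplication is the convolution product of Poly_Mapping.\<close>

type_synonym 'a mpoly = "(nat \<Rightarrow>\<^sub>0 nat) \<Rightarrow>\<^sub>0 'a"

definition Var :: "nat \<Rightarrow> 'a::comm_ring_1 mpoly" where
  "Var i = Poly_Mapping.single (Poly_Mapping.single i 1) 1"

definition Const :: "'a::comm_ring_1 \<Rightarrow> 'a mpoly" where
  "Const c = Poly_Mapping.single 0 c"

definition in_R :: "nat \<Rightarrow> 'a::comm_ring_1 mpoly \<Rightarrow> bool" where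
  "in_R n p \<longleftrightarrow> (\<forall>m::nat \<Rightarrow>\<^sub>0 nat. m \<in> Poly_Mapping.keys p \<longrightarrow> Poly_Mapping.keys m \<subseteq> {1..n})"

definition in_ideal :: "nat \<Rightarrow> 'i set \<Rightarrow> ('i \<Rightarrow> 'a::comm_ring_1 mpoly) \<Rightarrow> 'a mpoly \<Rightarrow> bool" where
  "in_ideal n S g f \<longleftrightarrow> (\<exists>b. (\<forall>i\<in>S. in_R n (b i)) \<and> f = (\<Sum>i\<in>S. b i * g i))"

definition minimally_generated :: "nat \<Rightarrow> 'i set \<Rightarrow> ('i \<Rightarrow> 'a::comm_ring_1 mpoly) \<Rightarrow> bool" where
  "minimally_generated n S g \<longleftrightarrow> (\<forall>i\<in>S. \<not> in_ideal n (S - {i}) g (g i))"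

definition ell :: "nat \<Rightarrow> 'a::comm_ring_1 mpoly" where
  "ell n = (\<Sum>i=1..n. Var i)"

definition gens :: "nat \<Rightarrow> (nat \<Rightarrow> nat) \<Rightarrow> nat \<Rightarrow> 'a::comm_ring_1 mpoly" where
  "gens n d i = (if i < n then Var i ^ d i else if i = n then Var n ^ 2 else ell n ^ d n)"

definition cc :: "nat \<Rightarrow> nat" where
  "cc di = (\<Sum>j=0..(di - 1) div 2. (di - 1 - 2*j)^2)"

end

theory Submission
  imports Defs
begin

text \<open>
  Put \<open>e = (d\<^sub>1, \<dots>, d\<^bsub>n-1\<^esub>, 2)\<close>, \<open>J = (x\<^sub>1^e\<^sub>1, \<dots>, x\<^sub>n^e\<^sub>n)\<close>,
  \<open>N = \<Sum>(e\<^sub>i - 1)\<close> and \<open>d = d\<^sub>n\<close>, so that \<open>I = J + (\<ell>^d)\<close>, and write the relation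
  as \<open>\<Sum> x\<^sub>i^e\<^sub>i a\<^sub>i + \<ell>^d b = 0\<close>. The operator \<open>F = \<Sum> ((e\<^sub>i - 1) \<partial>\<^sub>i - x\<^sub>i \<partial>\<^sub>i\<^sup>2)\<close>
  is the lowering operator of the \<open>sl\<^sub>2\<close>-action on \<open>R/J\<close> whose raising operator is
  multiplication by \<open>\<ell>\<close>: it maps \<open>J\<close> into \<open>J\<close>, and
  \<open>F (\<ell>^m a) = \<ell>^m F a + m \<ell>^(m-1) (N + 1 - m - 2\<theta>) a\<close> with \<open>\<theta>\<close> the Euler operator.
  Applying \<open>F\<close> twice to \<open>\<ell>^d b \<in> J\<close>, after rescaling the homogeneous components of \<open>b\<close>
  by inverses of weights that are nonzero because \<open>N + d\<close> is odd, gives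
  \<open>T = 2 d \<ell>^(d-1) F b + d (d - 1) \<ell>^(d-2) (N + 1 - d - 2\<theta>) b \<in> I\<close>.
  The third-order operator \<open>D = \<Sum> (3 (e\<^sub>i - 1) \<partial>\<^sub>i\<^sup>2 - 2 x\<^sub>i \<partial>\<^sub>i\<^sup>3)\<close> sends \<open>x\<^sub>k^e\<^sub>k s\<close> to
  \<open>6 c\<^sub>k x\<^sub>k^(e\<^sub>k-2) s\<close> modulo \<open>J\<close>; applied to the relation it shows that six times the
  asserted element plus \<open>3 T\<close> lies in \<open>I\<close>. Characteristic \<open>0\<close> is used to invert the
  weights and \<open>6\<close>.
\<close>

lemma poly_mapping_single_add_induct [case_names zero add]:
  assumes "P 0"
    and "\<And>p m c. m \<notin> Poly_Mapping.keys p \<Longrightarrow> c \<noteq> 0 \<Longrightarrow> P p \<Longrightarrow> P (Poly_Mapping.single m c + p)"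
  shows "P q"
proof (induction q rule: update_induct)
  case const
  show ?case by (rule assms(1))
next
  case (update p m c)
  have "Poly_Mapping.update m c p = Poly_Mapping.single m c + p"
    using update.hyps(1)
    by (intro poly_mapping_eqI) (auto simp: lookup_update lookup_add lookup_single in_keys_iff)
  with update show ?case by (simp add: assms(2))
qed

definition sum_terms :: "('m \<Rightarrow> 'b::zero \<Rightarrow> 'c::comm_monoid_add) \<Rightarrow> ('m \<Rightarrow>\<^sub>0 'b) \<Rightarrow> 'c" where
  "sum_terms f p = (\<Sum>m\<in>Poly_Mapping.keys p. f m (Poly_Mapping.lookup p m))"

lemma sum_terms_superset:
  assumes "finite S" "Poly_Mapping.keys p \<subseteq> S" "\<And>m. f m 0 = 0"
  shows "sum_terms f p = (\<Sum>m\<in>S. f m (Poly_Mapping.lookup p m))"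
  unfolding sum_terms_def
  by (rule sum.mono_neutral_left) (use assms in \<open>auto simp: in_keys_iff\<close>)

lemma sum_terms_add:
  assumes "\<And>m. f m 0 = 0" "\<And>m a b. f m (a + b) = f m a + f m b"
  shows "sum_terms f (p + q) = sum_terms f p + sum_terms f q"
proof -
  let ?S = "Poly_Mapping.keys p \<union> Poly_Mapping.keys q"
  have "sum_terms f (p + q) = (\<Sum>m\<in>?S. f m (Poly_Mapping.lookup (p + q) m))"
    by (rule sum_terms_superset) (use assms keys_add[of p q] in auto)
  also have "\<dots> = (\<Sum>m\<in>?S. f m (Poly_Mapping.lookup p m)) + (\<Sum>m\<in>?S. f m (Poly_Mapping.lookup q m))"
    by (simp add: lookup_add assms sum.distrib)
  also have "\<dots> = sum_terms f p + sum_terms f q"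
    by (subst (1 2) sum_terms_superset[where S = ?S]) (use assms in auto)
  finally show ?thesis .
qed

lemma sum_terms_single: "(\<And>m. f m 0 = 0) \<Longrightarrow> sum_terms f (Poly_Mapping.single m c) = f m c"
  by (simp add: sum_terms_def)

lemma sum_terms_zero [simp]: "sum_terms f 0 = 0"
  by (simp add: sum_terms_def)

lemma keys_sum_terms:
  "Poly_Mapping.keys (sum_terms f p)
     \<subseteq> (\<Union>m\<in>Poly_Mapping.keys p. Poly_Mapping.keys (f m (Poly_Mapping.lookup p m)))"
  unfolding sum_terms_def by (rule keys_sum)

definition total_deg :: "(nat \<Rightarrow>\<^sub>0 nat) \<Rightarrow> nat" where
  "total_deg m = (\<Sum>k\<in>Poly_Mapping.keys m. Poly_Mapping.lookup m k)"

lemma total_deg_superset: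
  assumes "finite S" "Poly_Mapping.keys m \<subseteq> S"
  shows "total_deg m = (\<Sum>k\<in>S. Poly_Mapping.lookup m k)"
  unfolding total_deg_def
  by (rule sum.mono_neutral_left) (use assms in \<open>auto simp: in_keys_iff\<close>)

lemma total_deg_add: "total_deg (m + m') = total_deg m + total_deg m'"
proof -
  let ?S = "Poly_Mapping.keys m \<union> Poly_Mapping.keys m'"
  have "total_deg (m + m') = (\<Sum>k\<in>?S. Poly_Mapping.lookup (m + m') k)"
    by (rule total_deg_superset) (use keys_add[of m m'] in auto)
  also have "\<dots> = (\<Sum>k\<in>?S. Poly_Mapping.lookup m k) + (\<Sum>k\<in>?S. Poly_Mapping.lookup m' k)"
    by (simp add: lookup_add sum.distrib)
  also have "\<dots> = total_deg m + total_deg m'"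
    by (subst (1 2) total_deg_superset[where S = ?S]) auto
  finally show ?thesis .
qed

lemma total_deg_single [simp]: "total_deg (Poly_Mapping.single i k) = k"
  by (simp add: total_deg_def)

lemma monomial_minus_single_add:
  fixes m :: "nat \<Rightarrow>\<^sub>0 nat"
  assumes "Poly_Mapping.lookup m i \<noteq> 0"
  shows "m - Poly_Mapping.single i 1 + Poly_Mapping.single i 1 = m"
  using assms
  by (intro poly_mapping_eqI) (auto simp: lookup_add lookup_minus lookup_single when_def)

lemma total_deg_minus_single:
  fixes m :: "nat \<Rightarrow>\<^sub>0 nat"
  assumes "Poly_Mapping.lookup m i \<noteq> 0"
  shows "total_deg m = Suc (total_deg (m - Poly_Mapping.single i 1))"
  using total_deg_add[of "m - Poly_Mapping.single i 1" "Poly_Mapping.single i 1"]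
  unfolding monomial_minus_single_add[OF assms] by simp

section \<open>Partial derivatives\<close>

definition pdiff :: "nat \<Rightarrow> 'a::comm_ring_1 mpoly \<Rightarrow> 'a mpoly" where
  "pdiff i p = sum_terms (\<lambda>m c. Poly_Mapping.single (m - Poly_Mapping.single i 1)
                                  (of_nat (Poly_Mapping.lookup m i) * c)) p"

lemma pdiff_single:
  "pdiff i (Poly_Mapping.single m c)
     = Poly_Mapping.single (m - Poly_Mapping.single i 1) (of_nat (Poly_Mapping.lookup m i) * c)"
  by (simp add: pdiff_def sum_terms_single)

lemma pdiff_add: "pdiff i (p + q) = pdiff i p + pdiff i q"
  unfolding pdiff_def by (rule sum_terms_add) (simp_all add: distrib_left single_add)

lemma pdiff_zero [simp]: "pdiff i 0 = 0"
  by (simp add: pdiff_def)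

lemma pdiff_uminus: "pdiff i (- p) = - pdiff i p"
  by (metis add.right_inverse pdiff_zero minus_unique pdiff_add)

lemma pdiff_diff: "pdiff i (p - q) = pdiff i p - pdiff i q"
  using pdiff_add[of i p "- q"] by (simp add: pdiff_uminus)

lemma pdiff_sum: "pdiff i (sum f A) = (\<Sum>x\<in>A. pdiff i (f x))"
  by (induction A rule: infinite_finite_induct) (auto simp: pdiff_add)

lemma monomial_add_minus_single_left:
  fixes m m' :: "nat \<Rightarrow>\<^sub>0 nat"
  assumes "Poly_Mapping.lookup m i \<noteq> 0"
  shows "m + m' - Poly_Mapping.single i 1 = m - Poly_Mapping.single i 1 + m'"
  using assms
  by (intro poly_mapping_eqI) (auto simp: lookup_add lookup_minus lookup_single when_def)

lemma monomial_add_minus_single_right: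
  fixes m m' :: "nat \<Rightarrow>\<^sub>0 nat"
  assumes "Poly_Mapping.lookup m i = 0"
  shows "m + m' - Poly_Mapping.single i 1 = m + (m' - Poly_Mapping.single i 1)"
  using assms
  by (intro poly_mapping_eqI) (auto simp: lookup_add lookup_minus lookup_single when_def)

lemma pdiff_single_mult_single:
  fixes a b :: "'a::comm_ring_1"
  shows "pdiff i (Poly_Mapping.single m a * Poly_Mapping.single m' b)
    = pdiff i (Poly_Mapping.single m a) * Poly_Mapping.single m' b
      + Poly_Mapping.single m a * pdiff i (Poly_Mapping.single m' b)"
proof -
  let ?e = "Poly_Mapping.single i 1 :: nat \<Rightarrow>\<^sub>0 nat"
  have lhs: "pdiff i (Poly_Mapping.single m a * Poly_Mapping.single m' b) =
      Poly_Mapping.single (m + m' - ?e) (of_nat (Poly_Mapping.lookup m i) * (a * b))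
    + Poly_Mapping.single (m + m' - ?e) (of_nat (Poly_Mapping.lookup m' i) * (a * b))"
    by (simp add: mult_single pdiff_single lookup_add distrib_right single_add)
  have rhs: "pdiff i (Poly_Mapping.single m a) * Poly_Mapping.single m' b
      + Poly_Mapping.single m a * pdiff i (Poly_Mapping.single m' b)
    = Poly_Mapping.single (m - ?e + m') (of_nat (Poly_Mapping.lookup m i) * (a * b))
    + Poly_Mapping.single (m + (m' - ?e)) (of_nat (Poly_Mapping.lookup m' i) * (a * b))"
    by (simp add: mult_single pdiff_single algebra_simps)
  consider "Poly_Mapping.lookup m i = 0" | "Poly_Mapping.lookup m' i = 0"
    | "Poly_Mapping.lookup m i \<noteq> 0" "Poly_Mapping.lookup m' i \<noteq> 0"
    by blast
  then show ?thesis
  proof cases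
    case 1
    then show ?thesis unfolding lhs rhs monomial_add_minus_single_right[OF 1] by simp
  next
    case 2
    then show ?thesis
      unfolding lhs rhs add.commute[of m] monomial_add_minus_single_right[OF 2]
      by (simp add: add.commute)
  next
    case 3
    have "m + m' - ?e = m - ?e + m'"
      by (rule monomial_add_minus_single_left[OF 3(1)])
    moreover have "m + m' - ?e = m + (m' - ?e)"
      using monomial_add_minus_single_left[OF 3(2), of m] by (metis add.commute)
    ultimately show ?thesis unfolding lhs rhs by (metis single_add)
  qed
qed

lemma pdiff_mult: "pdiff i (p * q) = pdiff i p * q + p * pdiff i q"
proof (induction p rule: poly_mapping_single_add_induct)
  case (add p m c)
  have "pdiff i (Poly_Mapping.single m c * q)
      = pdiff i (Poly_Mapping.single m c) * q + Poly_Mapping.single m c * pdiff i q"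
    by (induction q rule: poly_mapping_single_add_induct)
      (simp_all add: distrib_left pdiff_add pdiff_single_mult_single algebra_simps)
  with add.IH show ?case by (simp add: distrib_right pdiff_add algebra_simps)
qed simp

lemma pdiff_Const [simp]: "pdiff i (Const c) = 0"
  by (simp add: Const_def pdiff_single)

lemma pdiff_of_nat [simp]: "pdiff i (of_nat k) = 0"
  by (metis Const_def pdiff_Const single_of_nat)

lemma pdiff_numeral [simp]: "pdiff i (numeral k) = 0"
  by (metis Const_def pdiff_Const single_numeral)

lemma pdiff_one [simp]: "pdiff i 1 = 0"
  by (metis pdiff_of_nat of_nat_1)

lemma pdiff_Var: "pdiff i (Var j) = (if i = j then 1 else 0)"
  by (auto simp: Var_def pdiff_single lookup_single when_def)

lemma pdiff_power: "pdiff i (p ^ k) = of_nat k * p ^ (k - 1) * pdiff i p"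
  by (induction k) (auto simp: pdiff_mult algebra_simps power_eq_if)

section \<open>Rescaling the homogeneous components\<close>

definition deg_scale :: "(nat \<Rightarrow> 'a::comm_ring_1) \<Rightarrow> 'a mpoly \<Rightarrow> 'a mpoly" where
  "deg_scale g p = Poly_Mapping.mapp (\<lambda>m c. g (total_deg m) * c) p"

lemma lookup_deg_scale:
  "Poly_Mapping.lookup (deg_scale g p) m = g (total_deg m) * Poly_Mapping.lookup p m"
  by (simp add: deg_scale_def lookup_mapp when_def in_keys_iff)

lemma deg_scale_single:
  "deg_scale g (Poly_Mapping.single m c) = Poly_Mapping.single m (g (total_deg m) * c)"
  by (rule poly_mapping_eqI) (simp add: lookup_deg_scale lookup_single when_def)

lemma deg_scale_add: "deg_scale g (p + q) = deg_scale g p + deg_scale g q"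
  by (rule poly_mapping_eqI) (simp add: lookup_deg_scale lookup_add distrib_left)

lemma deg_scale_diff: "deg_scale g (p - q) = deg_scale g p - deg_scale g q"
  by (rule poly_mapping_eqI) (simp add: lookup_deg_scale lookup_minus right_diff_distrib)

lemma deg_scale_zero [simp]: "deg_scale g 0 = 0"
  by (rule poly_mapping_eqI) (simp add: lookup_deg_scale)

lemma deg_scale_sum: "deg_scale g (sum f A) = (\<Sum>x\<in>A. deg_scale g (f x))"
  by (induction A rule: infinite_finite_induct) (auto simp: deg_scale_add)

lemma deg_scale_deg_scale: "deg_scale f (deg_scale g p) = deg_scale (\<lambda>t. f t * g t) p"
  by (rule poly_mapping_eqI) (simp add: lookup_deg_scale mult.assoc)

lemma deg_scale_add_fun: "deg_scale f p + deg_scale g p = deg_scale (\<lambda>t. f t + g t) p"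
  by (rule poly_mapping_eqI) (simp add: lookup_deg_scale lookup_add distrib_right)

lemma deg_scale_const: "deg_scale (\<lambda>_. c) p = Const c * p"
proof (induction p rule: poly_mapping_single_add_induct)
  case (add p m c')
  then show ?case by (simp add: deg_scale_add deg_scale_single Const_def mult_single distrib_left)
qed simp

lemma lookup_Const_mult: "Poly_Mapping.lookup (Const c * p) m = c * Poly_Mapping.lookup p m"
  by (simp add: deg_scale_const[symmetric] lookup_deg_scale)

lemma Const_of_nat: "Const (of_nat k) = of_nat k"
  by (simp add: Const_def)

lemma Const_mult: "Const a * Const b = Const (a * b)"
  by (simp add: Const_def mult_single)

lemma Const_numeral: "Const (numeral k) = numeral k"
  by (simp add: Const_def)

lemma Const_diff: "Const (a - b) = Const a - Const b"
  by (simp add: Const_def single_diff)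

lemma Const_one: "Const 1 = 1"
  by (simp add: Const_def)

lemma deg_scale_Var_mult: "deg_scale g (Var i * p) = Var i * deg_scale (\<lambda>t. g (Suc t)) p"
proof (induction p rule: poly_mapping_single_add_induct)
  case (add p m c)
  then show ?case
    by (simp add: distrib_left deg_scale_add Var_def mult_single deg_scale_single total_deg_add)
qed simp

lemma deg_scale_Const_mult: "deg_scale g (Const c * p) = Const c * deg_scale g p"
  by (rule poly_mapping_eqI) (simp add: lookup_deg_scale lookup_Const_mult mult.left_commute)

lemma deg_scale_Var_power_mult:
  "deg_scale g (Var i ^ k * p) = Var i ^ k * deg_scale (\<lambda>t. g (t + k)) p"
  by (induction k arbitrary: g) (simp_all add: mult.assoc deg_scale_Var_mult)

lemma pdiff_deg_scale: "pdiff i (deg_scale g p) = deg_scale (\<lambda>t. g (Suc t)) (pdiff i p)"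
proof (induction p rule: poly_mapping_single_add_induct)
  case (add p m c)
  have "pdiff i (deg_scale g (Poly_Mapping.single m c))
      = deg_scale (\<lambda>t. g (Suc t)) (pdiff i (Poly_Mapping.single m c))"
    by (cases "Poly_Mapping.lookup m i = 0")
      (simp_all add: deg_scale_single pdiff_single total_deg_minus_single algebra_simps)
  with add.IH show ?case by (simp add: deg_scale_add pdiff_add)
qed simp

lemma in_R_zero [simp]: "in_R n 0"
  by (simp add: in_R_def)

lemma in_R_add: "in_R n p \<Longrightarrow> in_R n q \<Longrightarrow> in_R n (p + q)"
  unfolding in_R_def using keys_add[of p q] by blast

lemma in_R_uminus: "in_R n p \<Longrightarrow> in_R n (- p)"
  unfolding in_R_def by (auto simp: in_keys_iff)

lemma in_R_diff: "in_R n p \<Longrightarrow> in_R n q \<Longrightarrow> in_R n (p - q)"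
  using in_R_add[of n p "- q"] in_R_uminus[of n q] by simp

lemma in_R_mult:
  assumes "in_R n p" "in_R n q"
  shows "in_R n (p * q)"
  unfolding in_R_def
proof (intro allI impI)
  fix m assume "m \<in> Poly_Mapping.keys (p * q)"
  then obtain u v where "m = u + v" "u \<in> Poly_Mapping.keys p" "v \<in> Poly_Mapping.keys q"
    using keys_mult[of p q] by blast
  with assms show "Poly_Mapping.keys m \<subseteq> {1..n}"
    using keys_add[of u v] unfolding in_R_def by blast
qed

lemma in_R_sum: "(\<And>x. x \<in> A \<Longrightarrow> in_R n (f x)) \<Longrightarrow> in_R n (sum f A)"
  by (induction A rule: infinite_finite_induct) (auto intro: in_R_add)

lemma in_R_one [simp]: "in_R n 1"
  by (simp add: in_R_def)

lemma in_R_Var: "i \<in> {1..n} \<Longrightarrow> in_R n (Var i)"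
  by (simp add: in_R_def Var_def)

lemma in_R_Const [simp]: "in_R n (Const c)"
  by (simp add: in_R_def Const_def)

lemma in_R_of_nat [simp]: "in_R n (of_nat k)"
  by (metis Const_def in_R_Const single_of_nat)

lemma in_R_numeral [simp]: "in_R n (numeral k)"
  by (metis Const_def in_R_Const single_numeral)

lemma in_R_pdiff:
  assumes "in_R n p"
  shows "in_R n (pdiff i p)"
  unfolding in_R_def
proof (intro allI impI)
  fix m assume "m \<in> Poly_Mapping.keys (pdiff i p)"
  then obtain m' where "m' \<in> Poly_Mapping.keys p"
    and "m \<in> Poly_Mapping.keys (Poly_Mapping.single (m' - Poly_Mapping.single i 1)
                 (of_nat (Poly_Mapping.lookup m' i) * Poly_Mapping.lookup p m'))"
    unfolding pdiff_def by (rule UN_E[OF subsetD[OF keys_sum_terms]])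
  then have "m' \<in> Poly_Mapping.keys p" "m = m' - Poly_Mapping.single i 1"
    by (simp_all split: if_splits)
  moreover have "Poly_Mapping.keys (m' - Poly_Mapping.single i 1) \<subseteq> Poly_Mapping.keys m'"
    by (auto simp: in_keys_iff lookup_minus)
  ultimately show "Poly_Mapping.keys m \<subseteq> {1..n}"
    using assms unfolding in_R_def by blast
qed

lemma in_R_deg_scale: "in_R n p \<Longrightarrow> in_R n (deg_scale g p)"
  unfolding in_R_def deg_scale_def using keys_mapp_subset[of _ p] by (meson subsetD)

lemma single_sum: "Poly_Mapping.single m (sum f A) = (\<Sum>x\<in>A. Poly_Mapping.single m (f x))"
  by (induction A rule: infinite_finite_induct) (simp_all add: single_add)

lemma Var_mult_pdiff_single:
  "Var i * pdiff i (Poly_Mapping.single m c)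
     = Poly_Mapping.single m (of_nat (Poly_Mapping.lookup m i) * (c :: 'a::comm_ring_1))"
proof (cases "Poly_Mapping.lookup m i = 0")
  case False
  have "Var i * pdiff i (Poly_Mapping.single m c)
      = Poly_Mapping.single (Poly_Mapping.single i 1 + (m - Poly_Mapping.single i 1))
          (of_nat (Poly_Mapping.lookup m i) * c)"
    by (simp add: pdiff_single Var_def mult_single)
  then show ?thesis
    unfolding add.commute[of "Poly_Mapping.single i 1"] monomial_minus_single_add[OF False] .
qed (simp add: pdiff_single)

lemma euler_identity:
  assumes "in_R n p"
  shows "(\<Sum>i=1..n. Var i * pdiff i p) = deg_scale of_nat p"
  using assms
proof (induction p rule: poly_mapping_single_add_induct)
  case (add p m c)
  have "Poly_Mapping.keys (Poly_Mapping.single m c + p) = insert m (Poly_Mapping.keys p)"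
    using add.hyps by (auto simp: in_keys_iff lookup_add lookup_single when_def split: if_splits)
  then have p: "in_R n p" and m: "Poly_Mapping.keys m \<subseteq> {1..n}"
    using add.prems by (auto simp: in_R_def)
  have "(\<Sum>i=1..n. Var i * pdiff i (Poly_Mapping.single m c))
      = Poly_Mapping.single m ((\<Sum>i=1..n. of_nat (Poly_Mapping.lookup m i)) * c)"
    by (simp add: Var_mult_pdiff_single sum_distrib_right single_sum)
  also have "\<dots> = deg_scale of_nat (Poly_Mapping.single m c)"
    using total_deg_superset[OF _ m] by (simp add: deg_scale_single)
  finally show ?case
    using add.IH[OF p] by (simp add: pdiff_add distrib_left sum.distrib deg_scale_add)
qed simp

lemma in_ideal_zero: "in_ideal n S g 0"
  unfolding in_ideal_def by (rule exI[of _ "\<lambda>_. 0"]) simp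

lemma in_ideal_add:
  assumes "in_ideal n S g p" "in_ideal n S g q"
  shows "in_ideal n S g (p + q)"
proof -
  obtain u where u: "\<forall>i\<in>S. in_R n (u i)" "p = (\<Sum>i\<in>S. u i * g i)"
    using assms(1) by (auto simp: in_ideal_def)
  obtain v where v: "\<forall>i\<in>S. in_R n (v i)" "q = (\<Sum>i\<in>S. v i * g i)"
    using assms(2) by (auto simp: in_ideal_def)
  have "p + q = (\<Sum>i\<in>S. (u i + v i) * g i)"
    unfolding u(2) v(2) by (simp add: distrib_right sum.distrib)
  with u(1) v(1) show ?thesis
    unfolding in_ideal_def by (intro exI[of _ "\<lambda>i. u i + v i"]) (simp add: in_R_add)
qed

lemma in_ideal_mult:
  assumes "in_R n r" "in_ideal n S g p"
  shows "in_ideal n S g (r * p)"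
proof -
  obtain u where u: "\<forall>i\<in>S. in_R n (u i)" "p = (\<Sum>i\<in>S. u i * g i)"
    using assms(2) by (auto simp: in_ideal_def)
  have "r * p = (\<Sum>i\<in>S. (r * u i) * g i)"
    unfolding u(2) by (simp add: sum_distrib_left mult.assoc)
  with u(1) assms(1) show ?thesis
    unfolding in_ideal_def by (intro exI[of _ "\<lambda>i. r * u i"]) (simp add: in_R_mult)
qed

lemma in_ideal_uminus: "in_ideal n S g p \<Longrightarrow> in_ideal n S g (- p)"
  using in_ideal_mult[of n "- 1" S g p] by (simp add: in_R_uminus)

lemma in_ideal_diff: "in_ideal n S g p \<Longrightarrow> in_ideal n S g q \<Longrightarrow> in_ideal n S g (p - q)"
  using in_ideal_add[of n S g p "- q"] in_ideal_uminus[of n S g q] by simp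

lemma in_ideal_sum: "(\<And>x. x \<in> A \<Longrightarrow> in_ideal n S g (f x)) \<Longrightarrow> in_ideal n S g (sum f A)"
  by (induction A rule: infinite_finite_induct) (simp_all add: in_ideal_zero in_ideal_add)

lemma in_ideal_generator:
  assumes "finite S" "i \<in> S" "in_R n r"
  shows "in_ideal n S g (g i * r)"
proof -
  have "(\<Sum>j\<in>S. (if j = i then r else 0) * g j) = (\<Sum>j\<in>S. if j = i then r * g j else 0)"
    by (rule sum.cong) auto
  then have "g i * r = (\<Sum>j\<in>S. (if j = i then r else 0) * g j)"
    using assms(1,2) by (simp add: mult.commute)
  with assms(3) show ?thesis
    unfolding in_ideal_def by (intro exI[of _ "\<lambda>j. if j = i then r else 0"]) simp
qed

lemma in_ideal_mono:
  assumes "S \<subseteq> T" "finite T" "\<And>i. i \<in> S \<Longrightarrow> g i = g' i" "in_ideal n S g p"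
  shows "in_ideal n T g' p"
proof -
  obtain u where u: "\<forall>i\<in>S. in_R n (u i)" "p = (\<Sum>i\<in>S. u i * g i)"
    using assms(4) by (auto simp: in_ideal_def)
  define v where "v i = (if i \<in> S then u i else 0)" for i
  have "p = (\<Sum>i\<in>T. v i * g' i)"
    unfolding u(2) v_def by (rule sum.mono_neutral_cong_left) (use assms in auto)
  moreover have "\<forall>i\<in>T. in_R n (v i)"
    unfolding v_def using u(1) by auto
  ultimately show ?thesis
    unfolding in_ideal_def by blast
qed

section \<open>Differential operators\<close>

lemma nat_cases_012:
  fixes m :: nat
  obtains "m = 0" | "m = 1" | j where "m = j + 2"
proof (cases "m \<ge> 2")
  case True
  then show ?thesis using that(3)[of "m - 2"] by simp
qed (use that(1,2) in linarith)

lemma of_nat_mult_power_pred: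
  "(of_nat m :: 'a::comm_ring_1) * (x ^ (m - 1) * x) = of_nat m * x ^ m"
  by (cases m) (simp_all add: power_Suc2)

lemma of_nat_pred_mult_power_pred:
  "(of_nat (m - 1) :: 'a::comm_ring_1) * (x ^ (m - 2) * x) = of_nat (m - 1) * x ^ (m - 1)"
  using of_nat_mult_power_pred[of "m - 1" x] by (simp add: numeral_2_eq_2)

lemma of_nat_pred2_mult_power_pred:
  "(of_nat (m - 2) :: 'a::comm_ring_1) * (x ^ (m - 3) * x) = of_nat (m - 2) * x ^ (m - 2)"
  using of_nat_mult_power_pred[of "m - 2" x] by (simp add: numeral_2_eq_2 numeral_3_eq_3)

text \<open>
  On \<open>k[x]/(x^(c+1))\<close>, \<open>lowering1 c\<close> maps \<open>x^j\<close> to \<open>j (c + 1 - j) x^(j-1)\<close>: it is the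
  lowering operator of the \<open>sl\<^sub>2\<close>-action in which \<open>x\<close> raises. \<open>cubic1 c\<close> maps \<open>x^j\<close> to
  \<open>j (j - 1) (3 c + 4 - 2 j) x^(j-2)\<close>, in particular \<open>x^(c+1)\<close> to
  \<open>c (c + 1) (c + 2) x^(c-1) = 6 cc (c + 1) x^(c-1)\<close>.
\<close>

definition lowering1 :: "nat \<Rightarrow> nat \<Rightarrow> 'a::comm_ring_1 mpoly \<Rightarrow> 'a mpoly" where
  "lowering1 c i p = of_nat c * pdiff i p - Var i * pdiff i (pdiff i p)"

definition cubic1 :: "nat \<Rightarrow> nat \<Rightarrow> 'a::comm_ring_1 mpoly \<Rightarrow> 'a mpoly" where
  "cubic1 c i p = 3 * of_nat c * pdiff i (pdiff i p) - 2 * (Var i * pdiff i (pdiff i (pdiff i p)))"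

lemma lowering1_add: "lowering1 c i (p + q) = lowering1 c i p + lowering1 c i q"
  by (simp add: lowering1_def pdiff_add algebra_simps)

lemma cubic1_add: "cubic1 c i (p + q) = cubic1 c i p + cubic1 c i q"
  by (simp add: cubic1_def pdiff_add algebra_simps)

lemma lowering1_constant_mult:
  "pdiff i q = 0 \<Longrightarrow> lowering1 c i (q * s) = q * lowering1 c i s"
  by (simp add: lowering1_def pdiff_mult algebra_simps)

lemma cubic1_constant_mult:
  "pdiff i q = 0 \<Longrightarrow> cubic1 c i (q * s) = q * cubic1 c i s"
  by (simp add: cubic1_def pdiff_mult algebra_simps)

lemma lowering1_power_mult:
  assumes "pdiff i Y = 1"
  shows "lowering1 c i (Y ^ m * a)
    = Y ^ m * lowering1 c i a
      + of_nat m * Y ^ (m - 1) * (of_nat c * a - 2 * (Var i * pdiff i a))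
      - of_nat m * of_nat (m - 1) * Y ^ (m - 2) * (Var i * a)"
  by (simp add: assms lowering1_def pdiff_mult pdiff_power pdiff_add pdiff_diff
      algebra_simps numeral_2_eq_2)

lemma cubic1_power_mult:
  assumes "pdiff i Y = 1"
  shows "cubic1 c i (Y ^ m * a)
    = Y ^ m * cubic1 c i a
      + 6 * of_nat m * Y ^ (m - 1) * lowering1 c i a
      + of_nat m * of_nat (m - 1) * Y ^ (m - 2) * (3 * (of_nat c * a - 2 * (Var i * pdiff i a)))
      - 2 * of_nat m * of_nat (m - 1) * of_nat (m - 2) * Y ^ (m - 3) * (Var i * a)"
  by (simp add: assms cubic1_def lowering1_def pdiff_mult pdiff_power pdiff_add pdiff_diff
      algebra_simps numeral_2_eq_2 numeral_3_eq_3)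

lemma lowering1_Var_power_mult:
  "lowering1 (E - 1) k (Var k ^ E * s)
     = Var k ^ E * (lowering1 (E - 1) k s - 2 * of_nat E * pdiff k s)"
  using lowering1_power_mult[of k "Var k" "E - 1" E s]
  by (cases E rule: nat_cases_012) (simp_all add: pdiff_Var algebra_simps)

lemma cubic1_Var_power_mult:
  "cubic1 (E - 1) k (Var k ^ E * s)
     = Var k ^ E * (cubic1 (E - 1) k s - 6 * of_nat E * pdiff k (pdiff k s))
       + of_nat E * (of_nat E - 1) * (of_nat E + 1) * Var k ^ (E - 2) * s"
proof (cases E rule: nat_cases_012)
  case (3 j)
  with cubic1_power_mult[of k "Var k" "E - 1" E s] show ?thesis
    by (cases j) (simp_all add: pdiff_Var lowering1_def algebra_simps)
qed (use cubic1_power_mult[of k "Var k" "E - 1" E s]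
    in \<open>simp_all add: pdiff_Var lowering1_def algebra_simps\<close>)

definition socle_degree :: "nat \<Rightarrow> (nat \<Rightarrow> nat) \<Rightarrow> nat" where
  "socle_degree n e = (\<Sum>i=1..n. e i - 1)"

definition lowering_op :: "nat \<Rightarrow> (nat \<Rightarrow> nat) \<Rightarrow> 'a::comm_ring_1 mpoly \<Rightarrow> 'a mpoly" where
  "lowering_op n e p = (\<Sum>i=1..n. lowering1 (e i - 1) i p)"

definition cubic_op :: "nat \<Rightarrow> (nat \<Rightarrow> nat) \<Rightarrow> 'a::comm_ring_1 mpoly \<Rightarrow> 'a mpoly" where
  "cubic_op n e p = (\<Sum>i=1..n. cubic1 (e i - 1) i p)"

text \<open>\<open>N - 2 t\<close> is the \<open>sl\<^sub>2\<close>-weight of the degree \<open>t\<close> part of \<open>R/J\<close>.\<close>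

definition shifted_weight :: "nat \<Rightarrow> nat \<Rightarrow> nat \<Rightarrow> 'a::comm_ring_1" where
  "shifted_weight N m t = of_nat N + 1 - of_nat m - 2 * of_nat t"

lemma lowering_op_add: "lowering_op n e (p + q) = lowering_op n e p + lowering_op n e q"
  by (simp add: lowering_op_def lowering1_add sum.distrib)

lemma lowering_op_zero [simp]: "lowering_op n e 0 = 0"
  using lowering_op_add[of n e 0 0] by simp

lemma lowering_op_sum: "lowering_op n e (sum f A) = (\<Sum>x\<in>A. lowering_op n e (f x))"
  by (induction A rule: infinite_finite_induct) (simp_all add: lowering_op_add)

lemma cubic_op_add: "cubic_op n e (p + q) = cubic_op n e p + cubic_op n e q"
  by (simp add: cubic_op_def cubic1_add sum.distrib)

lemma cubic_op_zero [simp]: "cubic_op n e 0 = 0"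
  using cubic_op_add[of n e 0 0] by simp

lemma cubic_op_sum: "cubic_op n e (sum f A) = (\<Sum>x\<in>A. cubic_op n e (f x))"
  by (induction A rule: infinite_finite_induct) (simp_all add: cubic_op_add)

lemma lowering_op_Const_mult: "lowering_op n e (Const c * p) = Const c * lowering_op n e p"
  by (simp add: lowering_op_def lowering1_constant_mult sum_distrib_left)

lemma in_R_lowering_op: "in_R n p \<Longrightarrow> in_R n (lowering_op n e p)"
  unfolding lowering_op_def lowering1_def
  by (auto intro!: in_R_sum in_R_diff in_R_mult in_R_pdiff in_R_Var)

lemma in_R_cubic_op: "in_R n p \<Longrightarrow> in_R n (cubic_op n e p)"
  unfolding cubic_op_def cubic1_def
  by (auto intro!: in_R_sum in_R_diff in_R_mult in_R_pdiff in_R_Var)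

lemma sum_remove_factor:
  fixes n k :: nat and q :: "'a::comm_ring"
  assumes "k \<in> {1..n}" "\<And>i. i \<in> {1..n} - {k} \<Longrightarrow> f i = q * g i"
  shows "(\<Sum>i=1..n. f i) = f k + q * (\<Sum>i=1..n. g i) - q * g k"
proof -
  have "(\<Sum>i=1..n. f i) = f k + (\<Sum>i\<in>{1..n} - {k}. f i)"
    using assms(1) by (simp add: sum.remove)
  also have "(\<Sum>i\<in>{1..n} - {k}. f i) = q * (\<Sum>i\<in>{1..n} - {k}. g i)"
    using assms(2) by (simp add: sum_distrib_left)
  also have "(\<Sum>i\<in>{1..n} - {k}. g i) = (\<Sum>i=1..n. g i) - g k"
    using assms(1) by (simp add: sum_diff1)
  finally show ?thesis by (simp add: algebra_simps)
qed

lemma pdiff_Var_power_other: "i \<noteq> k \<Longrightarrow> pdiff i (Var k ^ E) = 0"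
  by (simp add: pdiff_power pdiff_Var)

lemma lowering_op_Var_power_mult:
  assumes "k \<in> {1..n}"
  shows "lowering_op n e (Var k ^ e k * s)
    = Var k ^ e k * (lowering_op n e s - 2 * of_nat (e k) * pdiff k s)"
proof -
  have "lowering_op n e (Var k ^ e k * s)
      = lowering1 (e k - 1) k (Var k ^ e k * s) + Var k ^ e k * lowering_op n e s
        - Var k ^ e k * lowering1 (e k - 1) k s"
    unfolding lowering_op_def
    by (rule sum_remove_factor[OF assms]) (simp add: lowering1_constant_mult pdiff_Var_power_other)
  then show ?thesis unfolding lowering1_Var_power_mult by (simp add: algebra_simps)
qed

lemma cubic_op_Var_power_mult:
  assumes "k \<in> {1..n}"
  shows "cubic_op n e (Var k ^ e k * s)
    = Var k ^ e k * (cubic_op n e s - 6 * of_nat (e k) * pdiff k (pdiff k s))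
      + of_nat (e k) * (of_nat (e k) - 1) * (of_nat (e k) + 1) * Var k ^ (e k - 2) * s"
proof -
  have "cubic_op n e (Var k ^ e k * s)
      = cubic1 (e k - 1) k (Var k ^ e k * s) + Var k ^ e k * cubic_op n e s
        - Var k ^ e k * cubic1 (e k - 1) k s"
    unfolding cubic_op_def
    by (rule sum_remove_factor[OF assms]) (simp add: cubic1_constant_mult pdiff_Var_power_other)
  then show ?thesis unfolding cubic1_Var_power_mult by (simp add: algebra_simps)
qed

lemma pdiff_ell: "i \<in> {1..n} \<Longrightarrow> pdiff i (ell n) = 1"
  by (simp add: ell_def pdiff_sum pdiff_Var)

lemma sum_Var_mult: "(\<Sum>i=1..n. Var i * q) = ell n * q"
  by (simp add: ell_def sum_distrib_right)

lemma sum_lowering_coefficients: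
  assumes "in_R n a"
  shows "(\<Sum>i=1..n. of_nat (e i - 1) * a - 2 * (Var i * pdiff i a))
    = deg_scale (\<lambda>t. of_nat (socle_degree n e) - 2 * of_nat t) a"
proof -
  have "(\<Sum>i=1..n. of_nat (e i - 1) * a - 2 * (Var i * pdiff i a))
      = of_nat (socle_degree n e) * a - 2 * deg_scale of_nat a"
    by (simp add: socle_degree_def sum_subtractf sum_distrib_left sum_distrib_right
        euler_identity[OF assms, symmetric])
  also have "\<dots> = deg_scale (\<lambda>t. of_nat (socle_degree n e) - 2 * of_nat t) a"
    by (rule poly_mapping_eqI)
      (simp add: lookup_deg_scale lookup_minus lookup_Const_mult Const_of_nat[symmetric]
        left_diff_distrib flip: Const_numeral)
  finally show ?thesis .
qed

lemma deg_scale_shifted_weight: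
  "deg_scale (shifted_weight N m) a
     = deg_scale (\<lambda>t. of_nat N - 2 * of_nat t) a - (of_nat m - 1) * a"
proof -
  have "(of_nat m - 1 :: 'a::comm_ring_1 mpoly) = Const (of_nat m - 1)"
    by (simp add: Const_diff Const_of_nat Const_one)
  then show ?thesis
    by (intro poly_mapping_eqI)
      (simp add: shifted_weight_def lookup_deg_scale lookup_minus lookup_Const_mult,
        simp add: algebra_simps)
qed

lemma lowering_op_ell_power_mult:
  assumes "in_R n a"
  shows "lowering_op n e (ell n ^ m * a)
    = ell n ^ m * lowering_op n e a
      + of_nat m * ell n ^ (m - 1) * deg_scale (shifted_weight (socle_degree n e) m) a"
proof -
  let ?L = "ell n :: 'a::comm_ring_1 mpoly"
  let ?X = "deg_scale (\<lambda>t. of_nat (socle_degree n e) - 2 * of_nat t) a"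
  have "lowering_op n e (?L ^ m * a) = (\<Sum>i=1..n. ?L ^ m * lowering1 (e i - 1) i a
      + of_nat m * ?L ^ (m - 1) * (of_nat (e i - 1) * a - 2 * (Var i * pdiff i a))
      - of_nat m * of_nat (m - 1) * ?L ^ (m - 2) * (Var i * a))"
    unfolding lowering_op_def
    by (intro sum.cong refl lowering1_power_mult pdiff_ell) simp
  also have "\<dots> = ?L ^ m * (\<Sum>i=1..n. lowering1 (e i - 1) i a)
      + of_nat m * ?L ^ (m - 1) * (\<Sum>i=1..n. of_nat (e i - 1) * a - 2 * (Var i * pdiff i a))
      - of_nat m * of_nat (m - 1) * ?L ^ (m - 2) * (\<Sum>i=1..n. Var i * a)"
    by (subst sum_subtractf, subst sum.distrib, simp only: sum_distrib_left)
  also have "\<dots> = ?L ^ m * lowering_op n e a + of_nat m * ?L ^ (m - 1) * ?X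
      - of_nat m * a * (of_nat (m - 1) * (?L ^ (m - 2) * ?L))"
    by (simp only: lowering_op_def sum_lowering_coefficients[OF assms] sum_Var_mult)
      (simp add: algebra_simps)
  also have "\<dots> = ?L ^ m * lowering_op n e a
      + of_nat m * ?L ^ (m - 1) * (?X - (of_nat m - 1) * a)"
    by (simp only: of_nat_pred_mult_power_pred) (cases m, simp_all add: algebra_simps)
  finally show ?thesis
    by (simp only: deg_scale_shifted_weight)
qed

lemma cubic_op_ell_power_mult:
  assumes "in_R n a"
  shows "cubic_op n e (ell n ^ m * a)
    = ell n ^ m * cubic_op n e a + 6 * of_nat m * ell n ^ (m - 1) * lowering_op n e a
      + 3 * of_nat m * (of_nat m - 1) * ell n ^ (m - 2)
          * deg_scale (shifted_weight (socle_degree n e) m) a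
      + of_nat m * (of_nat m - 1) * (of_nat m + 1) * ell n ^ (m - 2) * a"
proof -
  let ?L = "ell n :: 'a::comm_ring_1 mpoly"
  let ?X = "deg_scale (\<lambda>t. of_nat (socle_degree n e) - 2 * of_nat t) a"
  have "cubic_op n e (?L ^ m * a) = (\<Sum>i=1..n. ?L ^ m * cubic1 (e i - 1) i a
      + 6 * of_nat m * ?L ^ (m - 1) * lowering1 (e i - 1) i a
      + of_nat m * of_nat (m - 1) * ?L ^ (m - 2)
          * (3 * (of_nat (e i - 1) * a - 2 * (Var i * pdiff i a)))
      - 2 * of_nat m * of_nat (m - 1) * of_nat (m - 2) * ?L ^ (m - 3) * (Var i * a))"
    unfolding cubic_op_def
    by (intro sum.cong refl cubic1_power_mult pdiff_ell) simp
  also have "\<dots> = ?L ^ m * (\<Sum>i=1..n. cubic1 (e i - 1) i a)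
      + 6 * of_nat m * ?L ^ (m - 1) * (\<Sum>i=1..n. lowering1 (e i - 1) i a)
      + of_nat m * of_nat (m - 1) * ?L ^ (m - 2)
          * (\<Sum>i=1..n. 3 * (of_nat (e i - 1) * a - 2 * (Var i * pdiff i a)))
      - 2 * of_nat m * of_nat (m - 1) * of_nat (m - 2) * ?L ^ (m - 3) * (\<Sum>i=1..n. Var i * a)"
    by (subst sum_subtractf, subst sum.distrib, subst sum.distrib, simp only: sum_distrib_left)
  also have "\<dots> = ?L ^ m * cubic_op n e a + 6 * of_nat m * ?L ^ (m - 1) * lowering_op n e a
      + 3 * of_nat m * of_nat (m - 1) * ?L ^ (m - 2) * ?X
      - 2 * of_nat m * of_nat (m - 1) * a * (of_nat (m - 2) * (?L ^ (m - 3) * ?L))"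
    by (simp only: cubic_op_def lowering_op_def sum_distrib_left[symmetric]
        sum_lowering_coefficients[OF assms] sum_Var_mult)
      (simp add: algebra_simps)
  also have "\<dots> = ?L ^ m * cubic_op n e a + 6 * of_nat m * ?L ^ (m - 1) * lowering_op n e a
      + 3 * of_nat m * (of_nat m - 1) * ?L ^ (m - 2) * (?X - (of_nat m - 1) * a)
      + of_nat m * (of_nat m - 1) * (of_nat m + 1) * ?L ^ (m - 2) * a"
    by (simp only: of_nat_pred2_mult_power_pred)
      (cases m rule: nat_cases_012, simp_all add: algebra_simps)
  finally show ?thesis
    by (simp only: deg_scale_shifted_weight)
qed

lemma lowering1_deg_scale:
  "lowering1 c i (deg_scale g p) = deg_scale (\<lambda>t. g (Suc t)) (lowering1 c i p)"
  by (simp add: lowering1_def pdiff_deg_scale deg_scale_diff deg_scale_Var_mult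
      deg_scale_Const_mult flip: Const_of_nat)

lemma lowering_op_deg_scale:
  "lowering_op n e (deg_scale g p) = deg_scale (\<lambda>t. g (Suc t)) (lowering_op n e p)"
  by (simp add: lowering_op_def lowering1_deg_scale deg_scale_sum)

lemma deg_scale_ell_power_mult:
  "deg_scale g (ell n ^ k * p) = ell n ^ k * deg_scale (\<lambda>t. g (t + k)) p"
proof (induction k arbitrary: g)
  case (Suc k)
  have "deg_scale g (ell n * q) = ell n * deg_scale (\<lambda>t. g (Suc t)) q" for g and q :: "'a mpoly"
    by (simp add: ell_def sum_distrib_right deg_scale_sum deg_scale_Var_mult)
  with Suc.IH show ?case by (simp add: mult.assoc)
qed simp

abbreviation in_J :: "nat \<Rightarrow> (nat \<Rightarrow> nat) \<Rightarrow> 'a::comm_ring_1 mpoly \<Rightarrow> bool" where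
  "in_J n e p \<equiv> in_ideal n {1..n} (\<lambda>i. Var i ^ e i) p"

definition monomial_ell_gens :: "nat \<Rightarrow> (nat \<Rightarrow> nat) \<Rightarrow> nat \<Rightarrow> nat \<Rightarrow> 'a::comm_ring_1 mpoly" where
  "monomial_ell_gens n e d i = (if i \<le> n then Var i ^ e i else ell n ^ d)"

abbreviation in_I :: "nat \<Rightarrow> (nat \<Rightarrow> nat) \<Rightarrow> nat \<Rightarrow> 'a::comm_ring_1 mpoly \<Rightarrow> bool" where
  "in_I n e d p \<equiv> in_ideal n {1..n+1} (monomial_ell_gens n e d) p"

lemma in_J_imp_in_I: "in_J n e p \<Longrightarrow> in_I n e d p"
  by (erule in_ideal_mono[rotated 3]) (auto simp: monomial_ell_gens_def)

lemma in_J_Var_power_mult: "k \<in> {1..n} \<Longrightarrow> in_R n r \<Longrightarrow> in_J n e (Var k ^ e k * r)"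
  by (rule in_ideal_generator) simp_all

lemma in_I_Var_power_mult: "k \<in> {1..n} \<Longrightarrow> in_R n r \<Longrightarrow> in_I n e d (Var k ^ e k * r)"
  using in_ideal_generator[of "{1..n+1}" k n r "monomial_ell_gens n e d"]
  by (simp add: monomial_ell_gens_def)

lemma in_I_ell_power_mult: "in_R n r \<Longrightarrow> in_I n e d (ell n ^ d * r)"
  using in_ideal_generator[of "{1..n+1}" "n+1" n r "monomial_ell_gens n e d"]
  by (simp add: monomial_ell_gens_def)

lemma in_J_lowering_op:
  assumes "in_J n e p"
  shows "in_J n e (lowering_op n e p)"
proof -
  obtain u where u: "\<forall>i\<in>{1..n}. in_R n (u i)" "p = (\<Sum>i=1..n. u i * Var i ^ e i)"
    using assms by (auto simp: in_ideal_def)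
  have "lowering_op n e p
      = (\<Sum>i=1..n. Var i ^ e i * (lowering_op n e (u i) - 2 * of_nat (e i) * pdiff i (u i)))"
    unfolding u(2) lowering_op_sum
    by (intro sum.cong refl) (simp add: mult.commute[of "u _"] lowering_op_Var_power_mult)
  also have "in_J n e \<dots>"
    using u(1) by (intro in_ideal_sum in_J_Var_power_mult)
      (auto intro!: in_R_diff in_R_mult in_R_lowering_op in_R_pdiff)
  finally show ?thesis .
qed

lemma in_J_deg_scale:
  assumes "in_J n e p"
  shows "in_J n e (deg_scale g p)"
proof -
  obtain u where u: "\<forall>i\<in>{1..n}. in_R n (u i)" "p = (\<Sum>i=1..n. u i * Var i ^ e i)"
    using assms by (auto simp: in_ideal_def)
  have "deg_scale g p = (\<Sum>i=1..n. Var i ^ e i * deg_scale (\<lambda>t. g (t + e i)) (u i))"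
    unfolding u(2) deg_scale_sum
    by (intro sum.cong refl) (simp add: mult.commute[of "u _"] deg_scale_Var_power_mult)
  also have "in_J n e \<dots>"
    using u(1) by (intro in_ideal_sum in_J_Var_power_mult) (auto intro: in_R_deg_scale)
  finally show ?thesis .
qed

section \<open>The Lefschetz step\<close>

lemma in_I_lowering_op_twice:
  assumes bR: "in_R n b" and bJ: "in_J n e (ell n ^ d * b)"
  defines "w \<equiv> shifted_weight (socle_degree n e)"
  shows "in_I n e d
    (of_nat d * ell n ^ (d - 1) * deg_scale (\<lambda>t. w d t + w d (Suc t)) (lowering_op n e b)
     + of_nat d * of_nat (d - 1) * ell n ^ (d - 2) * deg_scale (\<lambda>t. w (d - 1) t * w d t) b)"
proof -
  let ?L = "ell n" and ?F = "lowering_op n e" and ?K = "deg_scale (w d) b"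
  have FbR: "in_R n (?F b)" and KR: "in_R n ?K"
    using bR by (simp_all add: in_R_lowering_op in_R_deg_scale)
  have e1: "?F (?L ^ d * b) = ?L ^ d * ?F b + Const (of_nat d) * (?L ^ (d - 1) * ?K)"
    using lowering_op_ell_power_mult[OF bR] by (simp add: w_def Const_of_nat mult.assoc)
  have e2: "?F (?L ^ d * ?F b)
      = ?L ^ d * ?F (?F b) + of_nat d * ?L ^ (d - 1) * deg_scale (w d) (?F b)"
    using lowering_op_ell_power_mult[OF FbR] by (simp add: w_def)
  have e3: "?F (?L ^ (d - 1) * ?K) = ?L ^ (d - 1) * deg_scale (\<lambda>t. w d (Suc t)) (?F b)
      + of_nat (d - 1) * ?L ^ (d - 2) * deg_scale (\<lambda>t. w (d - 1) t * w d t) b"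
    using lowering_op_ell_power_mult[OF KR, of e "d - 1"]
    by (simp add: w_def lowering_op_deg_scale deg_scale_deg_scale numeral_2_eq_2)
  have "?F (?F (?L ^ d * b)) - ?L ^ d * ?F (?F b)
      = of_nat d * ?L ^ (d - 1) * deg_scale (\<lambda>t. w d t + w d (Suc t)) (?F b)
        + of_nat d * of_nat (d - 1) * ?L ^ (d - 2) * deg_scale (\<lambda>t. w (d - 1) t * w d t) b"
    unfolding e1 lowering_op_add lowering_op_Const_mult e2 e3
    by (simp add: Const_of_nat algebra_simps flip: deg_scale_add_fun)
  moreover have "in_I n e d (?F (?F (?L ^ d * b)) - ?L ^ d * ?F (?F b))"
    using in_J_lowering_op[OF in_J_lowering_op[OF bJ]] in_R_lowering_op[OF FbR]
    by (intro in_ideal_diff in_J_imp_in_I in_I_ell_power_mult)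
  ultimately show ?thesis by simp
qed

lemma shifted_weight_add_Suc:
  "m \<ge> 1 \<Longrightarrow> shifted_weight N m t + shifted_weight N m (Suc t) = 2 * shifted_weight N (m - 1) (Suc t)"
  by (simp add: shifted_weight_def of_nat_diff algebra_simps)

lemma shifted_weight_nonzero:
  assumes "even (N + m)"
  shows "(shifted_weight N m t :: 'a::{comm_ring_1, ring_char_0}) \<noteq> 0"
proof -
  have "(shifted_weight N m t :: 'a) = of_int (int N + 1 - int m - 2 * int t)"
    by (simp add: shifted_weight_def)
  moreover have "int N + 1 - int m - 2 * int t \<noteq> 0"
    using assms by presburger
  ultimately show ?thesis by (metis of_int_eq_0_iff)
qed

lemma in_I_lowering_op_ell_power:
  fixes b :: "'k::field_char_0 mpoly"
  assumes bR: "in_R n b" and bJ: "in_J n e (ell n ^ d * b)"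
    and d: "d \<ge> 1" and parity: "odd (socle_degree n e + d)"
  shows "in_I n e d (2 * of_nat d * ell n ^ (d - 1) * lowering_op n e b
    + of_nat d * (of_nat d - 1) * ell n ^ (d - 2)
        * deg_scale (shifted_weight (socle_degree n e) d) b)"
proof -
  let ?L = "ell n" and ?F = "lowering_op n e"
  define w :: "nat \<Rightarrow> nat \<Rightarrow> 'k" where "w = shifted_weight (socle_degree n e)"
  txt \<open>Rescaling \<open>b\<close> degreewise by \<open>h\<close> turns the two weights of
    \<open>in_I_lowering_op_twice\<close> into \<open>2\<close> and \<open>w d\<close>.\<close>
  define h where "h t = inverse (w (d - 1) t)" for t
  have "w (d - 1) t \<noteq> 0" for t
    unfolding w_def using parity d by (intro shifted_weight_nonzero) (simp add: odd_add)
  then have wh: "w (d - 1) t * h t = 1" "w (d - 1) t * (x * h t) = x" for t x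
    by (simp_all add: h_def)
  define b' where "b' = deg_scale h b"
  have b'R: "in_R n b'"
    unfolding b'_def using bR by (rule in_R_deg_scale)
  have "?L ^ d * b' = deg_scale (\<lambda>t. h (t - d)) (?L ^ d * b)"
    by (simp add: b'_def deg_scale_ell_power_mult)
  then have b'J: "in_J n e (?L ^ d * b')"
    using in_J_deg_scale[OF bJ] by simp
  have "deg_scale (\<lambda>t. w d t + w d (Suc t)) (?F b') = deg_scale (\<lambda>_. 2) (?F b)"
    unfolding b'_def lowering_op_deg_scale deg_scale_deg_scale
    using wh d by (simp add: shifted_weight_add_Suc w_def mult.assoc)
  moreover have "deg_scale (\<lambda>t. w (d - 1) t * w d t) b' = deg_scale (w d) b"
    unfolding b'_def deg_scale_deg_scale by (simp only: mult.assoc wh(2))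
  moreover have "(of_nat (d - 1) :: 'k mpoly) = of_nat d - 1"
    using d by (simp add: of_nat_diff)
  ultimately show ?thesis
    using in_I_lowering_op_twice[OF b'R b'J]
    by (simp add: w_def deg_scale_const Const_numeral mult.assoc mult.left_commute)
qed

lemma sum_squares_same_parity:
  fixes k :: nat
  shows "6 * (\<Sum>j=0..k div 2. (k - 2 * j)^2) = k * (k + 1) * (k + 2)"
proof (induction k rule: nat_induct2)
  case (step k)
  have "(k + 2) div 2 = Suc (k div 2)"
    by simp
  then have "(\<Sum>j=0..(k + 2) div 2. (k + 2 - 2 * j)^2)
      = (k + 2)^2 + (\<Sum>j=0..k div 2. (k + 2 - 2 * Suc j)^2)"
    by (simp only: sum.atLeast0_atMost_Suc_shift) simp
  also have "\<dots> = (k + 2)^2 + (\<Sum>j=0..k div 2. (k - 2 * j)^2)"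
    by simp
  finally show ?case
    using step.IH by (simp add: algebra_simps power2_eq_square)
qed simp_all

lemma of_nat_cc:
  "6 * (of_nat (cc x) :: 'a::comm_ring_1) = of_nat x * (of_nat x - 1) * (of_nat x + 1)"
proof (cases x)
  case (Suc k)
  then have "6 * cc x = k * (k + 1) * (k + 2)"
    using sum_squares_same_parity[of k] by (simp add: cc_def)
  then have "(of_nat (6 * cc x) :: 'a) = of_nat (k * (k + 1) * (k + 2))"
    by (rule arg_cong)
  then show ?thesis
    using Suc by (simp add: algebra_simps)
qed (simp add: cc_def)

lemma cc_2: "cc 2 = 1"
  by (simp add: cc_def)

section \<open>Applying the operators to a relation\<close>

lemma in_I_cubic_op_relation:
  fixes a :: "nat \<Rightarrow> 'a::comm_ring_1 mpoly"
  assumes aR: "\<forall>i\<in>{1..n}. in_R n (a i)" and bR: "in_R n b"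
    and rel: "(\<Sum>i=1..n. Var i ^ e i * a i) + ell n ^ d * b = 0"
  defines "E \<equiv> (\<Sum>i=1..n. of_nat (cc (e i)) * a i * Var i ^ (e i - 2))
      + of_nat (cc d) * b * ell n ^ (d - 2)"
    and "T \<equiv> 2 * of_nat d * ell n ^ (d - 1) * lowering_op n e b
      + of_nat d * (of_nat d - 1) * ell n ^ (d - 2)
          * deg_scale (shifted_weight (socle_degree n e) d) b"
  shows "in_I n e d (6 * E + 3 * T)"
proof -
  let ?D = "cubic_op n e" and ?L = "ell n"
  define Z where "Z = (\<Sum>i=1..n. Var i ^ e i
      * (?D (a i) - 6 * of_nat (e i) * pdiff i (pdiff i (a i)))) + ?L ^ d * ?D b"
  have "in_I n e d Z"
    unfolding Z_def using aR bR
    by (intro in_ideal_add in_ideal_sum in_I_Var_power_mult in_I_ell_power_mult)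
      (auto intro!: in_R_diff in_R_mult in_R_pdiff in_R_cubic_op)
  have "?D (Var i ^ e i * a i)
      = Var i ^ e i * (?D (a i) - 6 * of_nat (e i) * pdiff i (pdiff i (a i)))
        + 6 * of_nat (cc (e i)) * a i * Var i ^ (e i - 2)" if "i \<in> {1..n}" for i
    unfolding cubic_op_Var_power_mult[OF that] of_nat_cc by (simp add: algebra_simps)
  then have "?D (\<Sum>i=1..n. Var i ^ e i * a i)
      = (\<Sum>i=1..n. Var i ^ e i * (?D (a i) - 6 * of_nat (e i) * pdiff i (pdiff i (a i))))
        + 6 * (\<Sum>i=1..n. of_nat (cc (e i)) * a i * Var i ^ (e i - 2))"
    by (simp add: cubic_op_sum sum.distrib sum_distrib_left mult.assoc)
  moreover have "?D (?L ^ d * b) = ?L ^ d * ?D b + 3 * T + 6 * of_nat (cc d) * b * ?L ^ (d - 2)"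
    unfolding cubic_op_ell_power_mult[OF bR] T_def of_nat_cc by (simp add: algebra_simps)
  ultimately have "0 = Z + (6 * E + 3 * T)"
    using arg_cong[OF rel, of ?D] by (simp add: cubic_op_add Z_def E_def algebra_simps)
  then have "6 * E + 3 * T = - Z"
    by (simp add: eq_neg_iff_add_eq_0 add.commute)
  with \<open>in_I n e d Z\<close> show ?thesis
    by (simp add: in_ideal_uminus)
qed

theorem relation_coefficients_in_ideal:
  fixes a :: "nat \<Rightarrow> 'k::field_char_0 mpoly"
  assumes d: "d \<ge> 1" and aR: "\<forall>i\<in>{1..n}. in_R n (a i)" and bR: "in_R n b"
    and rel: "(\<Sum>i=1..n. Var i ^ e i * a i) + ell n ^ d * b = 0"
    and parity: "odd (socle_degree n e + d)"
  shows "in_I n e d ((\<Sum>i=1..n. of_nat (cc (e i)) * a i * Var i ^ (e i - 2))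
    + of_nat (cc d) * b * ell n ^ (d - 2))" (is "in_I n e d ?E")
proof -
  let ?T = "2 * of_nat d * ell n ^ (d - 1) * lowering_op n e b
    + of_nat d * (of_nat d - 1) * ell n ^ (d - 2)
        * deg_scale (shifted_weight (socle_degree n e) d) b"
  have "ell n ^ d * b = (\<Sum>i=1..n. Var i ^ e i * (- a i))"
    using rel by (simp add: sum_negf eq_neg_iff_add_eq_0 add.commute)
  also have "in_J n e \<dots>"
    using aR by (intro in_ideal_sum in_J_Var_power_mult) (auto intro: in_R_uminus)
  finally have bJ: "in_J n e (ell n ^ d * b)" .
  have T: "in_I n e d ?T"
    by (rule in_I_lowering_op_ell_power[OF bR bJ d parity])
  have "in_I n e d (6 * ?E + 3 * ?T)"
    by (rule in_I_cubic_op_relation[OF aR bR rel])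
  then have "in_I n e d (Const (1 / 6) * (6 * ?E + 3 * ?T - 3 * ?T))"
    by (intro in_ideal_mult in_ideal_diff T) simp_all
  also have "Const (1 / 6) * (6 * ?E + 3 * ?T - 3 * ?T) = ?E"
  proof -
    have "Const (1 / 6) * (6 :: 'k mpoly) = 1"
      by (simp add: Const_numeral[symmetric] Const_mult Const_one)
    then show ?thesis
      by (simp only: add_diff_cancel mult.assoc[symmetric] mult_1_left)
  qed
  finally show ?thesis .
qed

lemma gens_relation_in_ideal:
  fixes d :: "nat \<Rightarrow> nat" and a :: "nat \<Rightarrow> 'k::field_char_0 mpoly"
  assumes n: "n \<ge> 2" and d_pos: "\<forall>i\<in>{1..n}. d i > 0"
    and aR: "\<forall>i\<in>{1..n+1}. in_R n (a i)"
    and rel: "(\<Sum>i=1..n+1. a i * gens n d i) = 0"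
    and parity: "odd (\<Sum>i=1..n. d i - 1)"
  shows "in_ideal n {1..n+1} (gens n d)
    ((\<Sum>i=1..n-1. Const (of_nat (cc (d i))) * a i * Var i ^ (d i - 2))
      + a n + Const (of_nat (cc (d n))) * a (n+1) * ell n ^ (d n - 2))"
proof -
  obtain m where m: "n = Suc m" "m \<ge> 1"
    using n by (cases n) auto
  define e where "e = d(n := 2)"
  have dn: "d n \<ge> 1"
    using bspec[OF d_pos, of n] n by simp
  have gens_eq: "gens n d = monomial_ell_gens n e (d n)"
    by (simp add: fun_eq_iff gens_def monomial_ell_gens_def e_def)
  have "(\<Sum>i=1..n. a i * gens n d i) = (\<Sum>i=1..n. Var i ^ e i * a i)"
    by (intro sum.cong) (simp_all add: gens_eq monomial_ell_gens_def mult.commute)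
  with rel have "(\<Sum>i=1..n. Var i ^ e i * a i) + ell n ^ d n * a (n+1) = 0"
    by (simp add: gens_def mult.commute)
  moreover have "odd (socle_degree n e + d n)"
    using parity dn m by (simp add: socle_degree_def e_def)
  ultimately have "in_I n e (d n) ((\<Sum>i=1..n. of_nat (cc (e i)) * a i * Var i ^ (e i - 2))
      + of_nat (cc (d n)) * a (n+1) * ell n ^ (d n - 2))"
    using aR by (intro relation_coefficients_in_ideal dn) simp_all
  moreover have "(\<Sum>i=1..n. of_nat (cc (e i)) * a i * Var i ^ (e i - 2))
      = (\<Sum>i=1..n-1. Const (of_nat (cc (d i))) * a i * Var i ^ (d i - 2)) + a n"
    using m by (simp add: e_def cc_2 Const_of_nat)
  ultimately show ?thesis
    by (simp add: gens_eq Const_of_nat)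
qed

lemma square_relation_sum_in_ideal:
  fixes a :: "nat \<Rightarrow> 'k::field_char_0 mpoly"
  assumes n: "odd n" and aR: "\<forall>i\<in>{1..n+1}. in_R n (a i)"
    and rel: "(\<Sum>i=1..n. a i * Var i ^ 2) + a (n+1) * ell n ^ 2 = 0"
  shows "in_ideal n {1..n+1} (\<lambda>i. if i \<le> n then Var i ^ 2 else ell n ^ 2) (\<Sum>i=1..n+1. a i)"
proof -
  have gens_eq: "monomial_ell_gens n (\<lambda>_. 2) 2 = (\<lambda>i. if i \<le> n then Var i ^ 2 else ell n ^ 2)"
    by (simp add: fun_eq_iff monomial_ell_gens_def)
  have "in_I n (\<lambda>_. 2) 2 ((\<Sum>i=1..n. of_nat (cc 2) * a i * Var i ^ (2 - 2))
      + of_nat (cc 2) * a (n+1) * ell n ^ (2 - 2))"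
    using aR rel n
    by (intro relation_coefficients_in_ideal) (simp_all add: socle_degree_def mult.commute)
  then show ?thesis
    unfolding gens_eq by (simp add: cc_2)
qed

theorem mainTheorem13:
  fixes n :: nat
  shows "(\<forall>(d :: nat \<Rightarrow> nat) (a :: nat \<Rightarrow> 'k::field_char_0 mpoly).
            n \<ge> 2
          \<and> (\<forall>i\<in>{1..n}. d i > 0)
          \<and> minimally_generated n {1..n+1} (gens n d)
          \<and> (\<forall>i\<in>{1..n+1}. in_R n (a i))
          \<and> (\<Sum>i=1..n+1. a i * gens n d i) = 0
          \<and> odd (\<Sum>i=1..n. d i - 1)
          \<longrightarrow> in_ideal n {1..n+1} (gens n d)
                ((\<Sum>i=1..n-1. Const (of_nat (cc (d i))) * a i * Var i ^ (d i - 2))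
                 + a n + Const (of_nat (cc (d n))) * a (n+1) * ell n ^ (d n - 2)))
       \<and> (\<forall>a :: nat \<Rightarrow> 'k mpoly.
            odd n
          \<and> (\<forall>i\<in>{1..n+1}. in_R n (a i))
          \<and> (\<Sum>i=1..n. a i * Var i ^ 2) + a (n+1) * ell n ^ 2 = 0
          \<longrightarrow> in_ideal n {1..n+1} (\<lambda>i. if i \<le> n then Var i ^ 2 else ell n ^ 2)
                (\<Sum>i=1..n+1. a i))"
  using gens_relation_in_ideal square_relation_sum_in_ideal by blast

end
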